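(* With $\omega$ and $(\mathbb G,E)$ as below, $\mathrm{supp}(\omega)=\mathbb G$.
   Context: $D$ finite, $m\ge2$, $\Gamma$ a finite set of cost functions $f:D^n\to\mathbb Q\cup\{\infty\}$, $\mathrm{dom} f=\{x:f(x)<\infty\}$. Maps $\mathbf g=(g_1,\dots,g_m):D^m\to D^m$ act on $x=(x^1,\dots,x^m)\in[D^n]^m$ by $\mathbf g(x)=(g_1(x),\dots,g_m(x))$ with $g_i$ applied coordinatewise; $f^m(x)=\frac1m\sum_i f(x^i)$. A generalized fractional polymorphism of $\Gamma$ of arity $m\to m$ is a finitely supported probability distribution $\rho$ on such maps with $\sum_{\mathbf g}\rho(\mathbf g)f^m(\mathbf g(x))\le f^m(x)$ for all $f\in\Gamma$, $x\in[\mathrm{dom} f]^m$. For $x\in D^m$ and permutation $\pi$, $x^\pi=(x_{\pi(1)},\dots,x_{\pi(m)})$ and $\mathbf g^\pi=(g_{\pi(1)},\dots,g_{\pi(m)})$; $\Omega$ is the set of maps $\mathbf g$ with $\mathbf g^\pi(x)=\mathbf g(x^\pi)$ for all $x,\pi$. Let $\omega$ be a generalized fractional polymorphism of $\Gamma$ of arity $m\to m$ with $\mathrm{supp}(\omega)\subseteq\Omega$ whose support contains the support of every other generalized fractional polymorphism of $\Gamma$ of arity $m\to m$ with support in $\Omega$ (such $\omega$ exists). Let $\mathbb G=\{\mathbf g_k\circ\dots\circ\mathbf g_1:k\ge0,\mathbf g_i\in\mathrm{supp}(\omega)\}$ (with $k=0$ giving the identity $\mathbb 1$) and $E=\{(\mathbf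 g,\mathbf h\circ\mathbf g):\mathbf g\in\mathbb G,\mathbf h\in\mathrm{supp}(\omega)\}$. *)

theory Defs
  imports "HOL-Library.Extended_Real" "HOL-Combinatorics.Permutations"
begin

(* D = 'd (finite type), index set {1..m} = 'm (finite type, CARD('m) = m).
   A tuple in D^m is a function 'm \<Rightarrow> 'd.
   A map g = (g_1,...,g_m) : D^m \<rightarrow> D^m is a function ('m \<Rightarrow> 'd) \<Rightarrow> ('m \<Rightarrow> 'd),
   with g_i = (\<lambda>x. g x i).
   A cost function of arity n is a pair (n, f) with f :: 'd list \<Rightarrow> ereal,
   only evaluated on lists of length n (elements of D^n); \<infinity> plays the role of \<infinity>. *)

type_synonym ('d,'m) gmap = "('m \<Rightarrow> 'd) \<Rightarrow> ('m \<Rightarrow> 'd)"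

definition cost_dom :: "nat \<Rightarrow> ('d list \<Rightarrow> ereal) \<Rightarrow> 'd list set" where
  "cost_dom n f = {x. length x = n \<and> f x < \<infinity>}"

definition rat_valued_cost :: "nat \<Rightarrow> ('d list \<Rightarrow> ereal) \<Rightarrow> bool" where
  "rat_valued_cost n f \<longleftrightarrow>
     (\<forall>x. length x = n \<longrightarrow> f x = \<infinity> \<or> (\<exists>q::rat. f x = ereal (of_rat q)))"

(* g applied to x = (x^1,...,x^m) \<in> [D^n]^m, g_i applied coordinatewise *)
definition gapply :: "nat \<Rightarrow> ('d,'m) gmap \<Rightarrow> ('m \<Rightarrow> 'd list) \<Rightarrow> ('m \<Rightarrow> 'd list)" where
  "gapply n g x = (\<lambda>i. map (\<lambda>j. g (\<lambda>k. x k ! j) i) [0..<n])"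

definition fm :: "('d list \<Rightarrow> ereal) \<Rightarrow> ('m::finite \<Rightarrow> 'd list) \<Rightarrow> ereal" where
  "fm f x = ereal (1 / real (card (UNIV::'m set))) * (\<Sum>i\<in>UNIV. f (x i))"

definition supp :: "('a \<Rightarrow> real) \<Rightarrow> 'a set" where
  "supp \<rho> = {g. \<rho> g \<noteq> 0}"

definition prob_dist :: "('a \<Rightarrow> real) \<Rightarrow> bool" where
  "prob_dist \<rho> \<longleftrightarrow> (\<forall>g. \<rho> g \<ge> 0) \<and> finite (supp \<rho>) \<and> (\<Sum>g\<in>supp \<rho>. \<rho> g) = 1"

definition gen_frac_pol ::
  "(nat \<times> ('d list \<Rightarrow> ereal)) set \<Rightarrow> (('d,'m::finite) gmap \<Rightarrow> real) \<Rightarrow> bool" where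
  "gen_frac_pol \<Gamma> \<rho> \<longleftrightarrow> prob_dist \<rho> \<and>
     (\<forall>(n,f)\<in>\<Gamma>. \<forall>x::'m \<Rightarrow> 'd list. (\<forall>i. x i \<in> cost_dom n f) \<longrightarrow>
        (\<Sum>g\<in>supp \<rho>. ereal (\<rho> g) * fm f (gapply n g x)) \<le> fm f x)"

definition Omega :: "('d,'m) gmap set" where
  "Omega = {g. \<forall>x \<pi>. \<pi> permutes (UNIV::'m set) \<longrightarrow>
                 (\<lambda>i. g x (\<pi> i)) = g (\<lambda>i. x (\<pi> i))}"

(* \<bbbG> = {g_k \<circ> ... \<circ> g_1 : k \<ge> 0, g_i \<in> S}, hs = [g_1,...,g_k] *)
definition comp_closure :: "('a \<Rightarrow> 'a) set \<Rightarrow> ('a \<Rightarrow> 'a) set" where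
  "comp_closure S = {foldl (\<lambda>acc h. h \<circ> acc) id hs | hs. set hs \<subseteq> S}"

end

theory Submission
  imports Defs
begin

text \<open>Both the point mass at the identity and the distribution of \<open>h \<circ> g\<close> for independent
  \<open>g, h \<sim> \<omega>\<close> are generalized fractional polymorphisms supported in \<open>\<Omega>\<close>: the former trivially,
  the latter by applying the inequality for \<open>\<omega>\<close> first at \<open>g(x)\<close> and then at \<open>x\<close>. Maximality
  of \<open>supp \<omega>\<close> therefore forces it to contain the identity and to be closed under composition,
  i.e. to be a monoid, which is exactly the statement \<open>supp \<omega> = \<bbbG>\<close>.\<close>

definition point_mass :: "'a \<Rightarrow> 'a \<Rightarrow> real" where
  "point_mass a = (\<lambda>b. of_bool (b = a))"

lemma supp_point_mass [simp]: "supp (point_mass a) = {a}"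
  by (auto simp: supp_def point_mass_def)

lemma prob_dist_point_mass: "prob_dist (point_mass a)"
  by (simp add: prob_dist_def) (simp add: point_mass_def)

definition comp_conv :: "(('a \<Rightarrow> 'a) \<Rightarrow> real) \<Rightarrow> (('a \<Rightarrow> 'a) \<Rightarrow> real) \<Rightarrow> ('a \<Rightarrow> 'a) \<Rightarrow> real" where
  "comp_conv \<rho> \<sigma> k = (\<Sum>p\<in>{p \<in> supp \<rho> \<times> supp \<sigma>. snd p \<circ> fst p = k}. \<rho> (fst p) * \<sigma> (snd p))"

lemma prob_dist_pos: "prob_dist \<rho> \<Longrightarrow> g \<in> supp \<rho> \<Longrightarrow> \<rho> g > 0"
  by (auto simp: prob_dist_def supp_def order_le_less)

lemma supp_comp_conv:
  assumes "prob_dist \<rho>" "prob_dist \<sigma>"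
  shows "supp (comp_conv \<rho> \<sigma>) = (\<lambda>p. snd p \<circ> fst p) ` (supp \<rho> \<times> supp \<sigma>)"
proof (intro set_eqI iffI)
  fix k assume "k \<in> supp (comp_conv \<rho> \<sigma>)"
  have "{p \<in> supp \<rho> \<times> supp \<sigma>. snd p \<circ> fst p = k} \<noteq> {}"
  proof
    assume "{p \<in> supp \<rho> \<times> supp \<sigma>. snd p \<circ> fst p = k} = {}"
    then have "comp_conv \<rho> \<sigma> k = 0" unfolding comp_conv_def by (simp only: sum.empty)
    with \<open>k \<in> supp (comp_conv \<rho> \<sigma>)\<close> show False by (simp add: supp_def)
  qed
  then show "k \<in> (\<lambda>p. snd p \<circ> fst p) ` (supp \<rho> \<times> supp \<sigma>)" by blast
next
  fix k assume "k \<in> (\<lambda>p. snd p \<circ> fst p) ` (supp \<rho> \<times> supp \<sigma>)"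
  then obtain p where p: "p \<in> {p \<in> supp \<rho> \<times> supp \<sigma>. snd p \<circ> fst p = k}" by blast
  have "comp_conv \<rho> \<sigma> k > 0"
    unfolding comp_conv_def
  proof (rule sum_pos2[OF _ p])
    show "finite {p \<in> supp \<rho> \<times> supp \<sigma>. snd p \<circ> fst p = k}"
      using assms by (simp add: prob_dist_def)
    show "0 < \<rho> (fst p) * \<sigma> (snd p)"
      using p prob_dist_pos[OF assms(1)] prob_dist_pos[OF assms(2)] by (simp add: mem_Times_iff)
    show "\<And>q. 0 \<le> \<rho> (fst q) * \<sigma> (snd q)"
      using assms by (simp add: prob_dist_def)
  qed
  then show "k \<in> supp (comp_conv \<rho> \<sigma>)" by (simp add: supp_def)
qed

lemma sum_comp_conv:
  assumes "prob_dist \<rho>" "prob_dist \<sigma>"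
  shows "(\<Sum>k\<in>supp (comp_conv \<rho> \<sigma>). comp_conv \<rho> \<sigma> k * F k)
       = (\<Sum>g\<in>supp \<rho>. \<Sum>h\<in>supp \<sigma>. \<rho> g * \<sigma> h * F (h \<circ> g))"
proof -
  let ?A = "supp \<rho> \<times> supp \<sigma>"
  have fin: "finite ?A" "finite (supp (comp_conv \<rho> \<sigma>))"
    using assms by (simp_all add: supp_comp_conv prob_dist_def)
  have "(\<Sum>k\<in>supp (comp_conv \<rho> \<sigma>). comp_conv \<rho> \<sigma> k * F k)
      = (\<Sum>k\<in>supp (comp_conv \<rho> \<sigma>). \<Sum>p\<in>{p \<in> ?A. snd p \<circ> fst p = k}.
           \<rho> (fst p) * \<sigma> (snd p) * F (snd p \<circ> fst p))"
    by (auto simp: comp_conv_def sum_distrib_right intro!: sum.cong)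
  also have "\<dots> = (\<Sum>p\<in>?A. \<rho> (fst p) * \<sigma> (snd p) * F (snd p \<circ> fst p))"
    by (rule sum.group[OF fin]) (simp add: supp_comp_conv assms)
  also have "\<dots> = (\<Sum>g\<in>supp \<rho>. \<Sum>h\<in>supp \<sigma>. \<rho> g * \<sigma> h * F (h \<circ> g))"
    by (simp add: sum.cartesian_product case_prod_beta)
  finally show ?thesis .
qed

lemma prob_dist_comp_conv:
  assumes "prob_dist \<rho>" "prob_dist \<sigma>"
  shows "prob_dist (comp_conv \<rho> \<sigma>)"
proof -
  have "(\<Sum>k\<in>supp (comp_conv \<rho> \<sigma>). comp_conv \<rho> \<sigma> k) = sum \<rho> (supp \<rho>) * sum \<sigma> (supp \<sigma>)"
    using sum_comp_conv[OF assms, of "\<lambda>_. 1"] by (simp add: sum_product)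
  moreover have "\<forall>k. comp_conv \<rho> \<sigma> k \<ge> 0"
    using assms by (auto simp: comp_conv_def prob_dist_def intro!: sum_nonneg)
  ultimately show ?thesis
    using assms by (simp add: prob_dist_def supp_comp_conv)
qed

lemma length_gapply [simp]: "length (gapply n g x i) = n"
  by (simp add: gapply_def)

lemma gapply_id: "\<forall>i. length (x i) = n \<Longrightarrow> gapply n id x = x"
  by (auto simp: gapply_def fun_eq_iff intro: nth_equalityI)

lemma gapply_comp: "gapply n (h \<circ> g) x = gapply n h (gapply n g x)"
  by (auto simp: gapply_def fun_eq_iff intro!: map_cong arg_cong[where f = h])

lemma fm_finite:
  fixes y :: "'m::finite \<Rightarrow> 'd list"
  assumes "rat_valued_cost n f" "\<forall>i. y i \<in> cost_dom n f"
  shows "fm f y = ereal (real_of_ereal (fm f y))"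
proof -
  have "\<forall>i. \<exists>r. f (y i) = ereal r"
    using assms unfolding rat_valued_cost_def cost_dom_def by force
  then obtain r where "\<And>i. f (y i) = ereal (r i)" by metis
  then show ?thesis by (simp add: fm_def)
qed

lemma fm_infinite:
  fixes y :: "'m::finite \<Rightarrow> 'd list"
  assumes "\<forall>i. length (y i) = n" "\<not> (\<forall>i. y i \<in> cost_dom n f)"
  shows "fm f y = \<infinity>"
proof -
  from assms obtain i where "f (y i) = \<infinity>"
    by (auto simp: cost_dom_def less_top[symmetric])
  then have "(\<Sum>i\<in>UNIV. f (y i)) = \<infinity>" by (auto simp: sum_Pinfty)
  then show ?thesis by (simp add: fm_def finite_UNIV_card_ge_0)
qed

lemma sum_ereal_fm_gapply:
  assumes "rat_valued_cost n f" "\<forall>g\<in>A. \<forall>i. gapply n g x i \<in> cost_dom n f"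
  shows "(\<Sum>g\<in>A. ereal (\<rho> g) * fm f (gapply n g x))
       = ereal (\<Sum>g\<in>A. \<rho> g * real_of_ereal (fm f (gapply n g x)))"
proof -
  have "ereal (\<rho> g) * fm f (gapply n g x) = ereal (\<rho> g * real_of_ereal (fm f (gapply n g x)))"
    if "g \<in> A" for g
  proof -
    have "fm f (gapply n g x) = ereal (real_of_ereal (fm f (gapply n g x)))"
      using assms(2) that by (intro fm_finite[OF assms(1)]) auto
    then obtain r where "fm f (gapply n g x) = ereal r" by blast
    then show ?thesis by simp
  qed
  then show ?thesis by simp
qed

context
  fixes \<Gamma> :: "(nat \<times> ('d list \<Rightarrow> ereal)) set"
    and \<rho> :: "('d, 'm::finite) gmap \<Rightarrow> real"
    and n f and x :: "'m \<Rightarrow> 'd list"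
  assumes gfp: "gen_frac_pol \<Gamma> \<rho>" and cost: "(n, f) \<in> \<Gamma>" and rat: "rat_valued_cost n f"
    and dom: "\<forall>i. x i \<in> cost_dom n f"
begin

lemma gen_frac_pol_le: "(\<Sum>g\<in>supp \<rho>. ereal (\<rho> g) * fm f (gapply n g x)) \<le> fm f x"
  using gfp cost dom by (auto simp: gen_frac_pol_def)

text \<open>A single map sending \<open>x\<close> outside the domain would make the left-hand side infinite.\<close>

lemma gen_frac_pol_gapply_dom:
  assumes "g \<in> supp \<rho>"
  shows "gapply n g x i \<in> cost_dom n f"
proof (rule ccontr)
  have pd: "prob_dist \<rho>" using gfp by (simp add: gen_frac_pol_def)
  assume "gapply n g x i \<notin> cost_dom n f"
  then have "fm f (gapply n g x) = \<infinity>" by (intro fm_infinite) auto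
  moreover have "\<rho> g > 0" using pd assms by (rule prob_dist_pos)
  moreover have "finite (supp \<rho>)" using pd by (simp add: prob_dist_def)
  ultimately have "(\<Sum>g\<in>supp \<rho>. ereal (\<rho> g) * fm f (gapply n g x)) = \<infinity>"
    using assms by (auto simp: sum_Pinfty intro!: bexI[of _ g])
  with gen_frac_pol_le fm_finite[OF rat dom] show False by simp
qed

lemma gen_frac_pol_le_real:
  "(\<Sum>g\<in>supp \<rho>. \<rho> g * real_of_ereal (fm f (gapply n g x))) \<le> real_of_ereal (fm f x)"
proof -
  have "(\<Sum>g\<in>supp \<rho>. ereal (\<rho> g) * fm f (gapply n g x))
      = ereal (\<Sum>g\<in>supp \<rho>. \<rho> g * real_of_ereal (fm f (gapply n g x)))"
    using gen_frac_pol_gapply_dom by (intro sum_ereal_fm_gapply[OF rat]) blast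
  moreover obtain r where "fm f x = ereal r"
    using fm_finite[OF rat dom] by blast
  ultimately show ?thesis
    using gen_frac_pol_le by simp
qed

end

lemma gen_frac_pol_point_mass_id: "gen_frac_pol \<Gamma> (point_mass id)"
  unfolding gen_frac_pol_def
  by (auto simp: prob_dist_point_mass cost_dom_def gapply_id) (simp add: point_mass_def)

lemma gen_frac_pol_comp_conv:
  fixes \<rho> \<sigma> :: "('d, 'm::finite) gmap \<Rightarrow> real"
  assumes \<rho>: "gen_frac_pol \<Gamma> \<rho>" and \<sigma>: "gen_frac_pol \<Gamma> \<sigma>"
    and rat: "\<forall>(n, f)\<in>\<Gamma>. rat_valued_cost n f"
  shows "gen_frac_pol \<Gamma> (comp_conv \<rho> \<sigma>)"
proof -
  have pd: "prob_dist \<rho>" "prob_dist \<sigma>" using \<rho> \<sigma> by (simp_all add: gen_frac_pol_def)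
  have "(\<Sum>k\<in>supp (comp_conv \<rho> \<sigma>). ereal (comp_conv \<rho> \<sigma> k) * fm f (gapply n k x)) \<le> fm f x"
    if cost: "(n, f) \<in> \<Gamma>" and dom: "\<forall>i. x i \<in> cost_dom n f" for n f x
  proof -
    have rat_f: "rat_valued_cost n f" using rat cost by auto
    define F where "F y k = real_of_ereal (fm f (gapply n k y))" for y :: "'m \<Rightarrow> 'd list" and k
    note dom_g = gen_frac_pol_gapply_dom[OF \<rho> cost rat_f dom]
    have dom_hg: "\<forall>k\<in>supp (comp_conv \<rho> \<sigma>). \<forall>i. gapply n k x i \<in> cost_dom n f"
      using gen_frac_pol_gapply_dom[OF \<sigma> cost rat_f] dom_g
      by (auto simp: supp_comp_conv[OF pd] gapply_comp)
    have "(\<Sum>k\<in>supp (comp_conv \<rho> \<sigma>). comp_conv \<rho> \<sigma> k * F x k)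
        = (\<Sum>g\<in>supp \<rho>. \<rho> g * (\<Sum>h\<in>supp \<sigma>. \<sigma> h * F (gapply n g x) h))"
      by (simp add: sum_comp_conv[OF pd] sum_distrib_left mult.assoc F_def gapply_comp)
    also have "\<dots> \<le> (\<Sum>g\<in>supp \<rho>. \<rho> g * F x g)"
      using gen_frac_pol_le_real[OF \<sigma> cost rat_f] dom_g pd(1)
      by (auto simp: F_def prob_dist_def intro!: sum_mono mult_left_mono)
    also have "\<dots> \<le> real_of_ereal (fm f x)"
      using gen_frac_pol_le_real[OF \<rho> cost rat_f dom] by (simp add: F_def)
    finally have "(\<Sum>k\<in>supp (comp_conv \<rho> \<sigma>). comp_conv \<rho> \<sigma> k * F x k) \<le> real_of_ereal (fm f x)" .
    moreover obtain r where "fm f x = ereal r" using fm_finite[OF rat_f dom] by blast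
    ultimately show ?thesis
      using sum_ereal_fm_gapply[OF rat_f dom_hg] by (simp add: F_def)
  qed
  then show ?thesis
    using prob_dist_comp_conv[OF pd] by (auto simp: gen_frac_pol_def)
qed

lemma id_in_Omega: "id \<in> Omega"
  by (simp add: Omega_def)

lemma comp_in_Omega: "g \<in> Omega \<Longrightarrow> h \<in> Omega \<Longrightarrow> h \<circ> g \<in> Omega"
  by (auto simp: Omega_def fun_eq_iff)

lemma comp_closure_eq_self:
  assumes "id \<in> S" and comp: "\<And>g h. g \<in> S \<Longrightarrow> h \<in> S \<Longrightarrow> h \<circ> g \<in> S"
  shows "comp_closure S = S"
proof
  have "foldl (\<lambda>acc h. h \<circ> acc) acc hs \<in> S" if "acc \<in> S" "set hs \<subseteq> S" for acc hs
    using that by (induction hs arbitrary: acc) (auto intro: comp)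
  then show "comp_closure S \<subseteq> S"
    using \<open>id \<in> S\<close> by (auto simp: comp_closure_def)
  show "S \<subseteq> comp_closure S"
    unfolding comp_closure_def by (auto intro!: exI[of _ "[_]"])
qed

theorem proposition6p2:
  fixes \<Gamma> :: "(nat \<times> ('d::finite list \<Rightarrow> ereal)) set"
    and \<omega> :: "('d, 'm::finite) gmap \<Rightarrow> real"
  assumes m2: "card (UNIV::'m set) \<ge> 2"
    and finGamma: "finite \<Gamma>"
    and ratGamma: "\<forall>(n,f)\<in>\<Gamma>. rat_valued_cost n f"
    and omega_gfp: "gen_frac_pol \<Gamma> \<omega>"
    and omega_Omega: "supp \<omega> \<subseteq> Omega"
    and omega_max: "\<forall>\<rho>. gen_frac_pol \<Gamma> \<rho> \<and> supp \<rho> \<subseteq> Omega \<longrightarrow> supp \<rho> \<subseteq> supp \<omega>"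
  shows "supp \<omega> = comp_closure (supp \<omega>)"
proof -
  have pd: "prob_dist \<omega>" using omega_gfp by (simp add: gen_frac_pol_def)
  have "id \<in> supp \<omega>"
    using omega_max gen_frac_pol_point_mass_id id_in_Omega by fastforce
  moreover have "h \<circ> g \<in> supp \<omega>" if "g \<in> supp \<omega>" "h \<in> supp \<omega>" for g h
  proof -
    have "supp (comp_conv \<omega> \<omega>) \<subseteq> Omega"
      using omega_Omega by (auto simp: supp_comp_conv[OF pd pd] intro!: comp_in_Omega)
    then have "supp (comp_conv \<omega> \<omega>) \<subseteq> supp \<omega>"
      using omega_max gen_frac_pol_comp_conv[OF omega_gfp omega_gfp ratGamma] by blast
    moreover have "h \<circ> g \<in> supp (comp_conv \<omega> \<omega>)"
      unfolding supp_comp_conv[OF pd pd] using that by (intro rev_image_eqI[of "(g, h)"]) auto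
    ultimately show ?thesis by blast
  qed
  ultimately show ?thesis by (simp add: comp_closure_eq_self)
qed

end
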